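(* Under the standing setting below, suppose $\Omega=\mathcal{T}^{-1}(0)\neq\emptyset$, and let $\{z^k\}$ be any sequence generated by $z^{k+1}\approx\mathcal{P}_k(z^k)$ satisfying criterion (A): $\|z^{k+1}-\mathcal{P}_k(z^k)\|_{\mathcal{M}_k}\le\epsilon_k$ with $\epsilon_k\ge0$ and $\sum_{k=0}^\infty\epsilon_k<\infty$. Then $\{z^k\}$ is bounded, \[\mathrm{dist}_{\mathcal{M}_{k+1}}(z^{k+1},\Omega)\le(1+\nu_k)\,\mathrm{dist}_{\mathcal{M}_k}(z^k,\Omega)+(1+\nu_k)\epsilon_k\quad\forall k\ge0,\] and $\{z^k\}$ converges to a point $z^\infty$ with $0\in\mathcal{T}(z^\infty)$.
   Context: Standing setting: $\mathcal{X}$ is a finite-dimensional real Hilbert space, $\mathcal{T}:\mathcal{X}\rightrightarrows\mathcal{X}$ is maximal monotone. $\{c_k\}$ is a sequence of positive reals bounded away from zero. $\{\mathcal{M}_k\}$ are self-adjoint positive definite linear operators on $\mathcal{X}$ satisfying $(1+\nu_k)\mathcal{M}_k\succeq\mathcal{M}_{k+1}$, $\mathcal{M}_k\succeq\lambda_{\min}\mathcal{I}$ for all $k\ge0$, and $\limsup_{k\to\infty}\lambda_{\max}(\mathcal{M}_k)=\lambda_\infty$, where $\{\nu_k\}$ is a nonnegative summable sequence and $+\infty>\lambda_\infty\ge\lambda_{\min}>0$. $\mathcal{P}_k:=(\mathcal{M}_k+c_k\mathcal{T})^{-1}\mathcal{M}_k$ (single-valued). For a self-adjoint positive definite $\mathcal{M}$,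 $\|x\|_{\mathcal{M}}=\sqrt{\langle x,\mathcal{M}x\rangle}$ and $\mathrm{dist}_{\mathcal{M}}(x,D)=\inf_{x'\in D}\|x-x'\|_{\mathcal{M}}$. *)

theory Defs
  imports "HOL-Analysis.Analysis"
begin

text \<open>Set-valued operators on a finite-dimensional real Hilbert space
  (modelled by a type of class euclidean_space) are functions into sets.\<close>

definition monotone_op :: "('a::real_inner \<Rightarrow> 'a set) \<Rightarrow> bool" where
  "monotone_op T \<longleftrightarrow>
     (\<forall>x y u v. u \<in> T x \<longrightarrow> v \<in> T y \<longrightarrow> 0 \<le> (x - y) \<bullet> (u - v))"

definition maximal_monotone :: "('a::real_inner \<Rightarrow> 'a set) \<Rightarrow> bool" where
  "maximal_monotone T \<longleftrightarrow> monotone_op T \<and>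
     (\<forall>x u. (\<forall>y v. v \<in> T y \<longrightarrow> 0 \<le> (x - y) \<bullet> (u - v)) \<longrightarrow> u \<in> T x)"

definition self_adjoint_pd :: "('a::real_inner \<Rightarrow> 'a) \<Rightarrow> bool" where
  "self_adjoint_pd M \<longleftrightarrow> linear M \<and> (\<forall>x y. M x \<bullet> y = x \<bullet> M y) \<and>
     (\<forall>x. x \<noteq> 0 \<longrightarrow> 0 < x \<bullet> M x)"

definition loewner_ge :: "('a::real_inner \<Rightarrow> 'a) \<Rightarrow> ('a \<Rightarrow> 'a) \<Rightarrow> bool" where
  "loewner_ge A B \<longleftrightarrow> (\<forall>x. x \<bullet> B x \<le> x \<bullet> A x)"

definition lambda_max :: "('a::real_inner \<Rightarrow> 'a) \<Rightarrow> real" where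
  "lambda_max M = Sup {x \<bullet> M x | x. norm x = 1}"

definition Mnorm :: "('a::real_inner \<Rightarrow> 'a) \<Rightarrow> 'a \<Rightarrow> real" where
  "Mnorm M x = sqrt (x \<bullet> M x)"

definition Mdist :: "('a::real_inner \<Rightarrow> 'a) \<Rightarrow> 'a \<Rightarrow> 'a set \<Rightarrow> real" where
  "Mdist M x D = Inf {Mnorm M (x - x') | x'. x' \<in> D}"

text \<open>P = (M + c T)^{-1} M, single-valued: P z is the unique w with
  M z \<in> M w + c T w.\<close>

definition prox_op :: "('a::real_inner \<Rightarrow> 'a) \<Rightarrow> real \<Rightarrow> ('a \<Rightarrow> 'a set) \<Rightarrow> 'a \<Rightarrow> 'a" where
  "prox_op M c T z = (THE w. \<exists>v \<in> T w. M z = M w + c *\<^sub>R v)"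

end

theory Submission
  imports Defs
begin

text \<open>The resolvent \<open>P\<^sub>k\<close> is well defined by a Minty-type argument: by the Debrunner--Flor
  lemma (a consequence of Brouwer's fixed point theorem) the sets
  \<open>{w. 0 \<le> \<langle>y - w, u - c\<^sup>-\<^sup>1 M (z - w)\<rangle>}\<close>, \<open>u \<in> T y\<close>, have the finite intersection property,
  and they are compact because \<open>M\<close> is coercive; maximality puts a common point into the
  resolvent. For every zero \<open>s\<close> of \<open>T\<close>, monotonicity makes the resolvent firmly nonexpansive,
  \<open>\<parallel>z - P z\<parallel>\<^sup>2 + \<parallel>P z - s\<parallel>\<^sup>2 \<le> \<parallel>z - s\<parallel>\<^sup>2\<close> in the \<open>M\<^sub>k\<close>-norm, and changing the metric costs
  at most a factor \<open>1 + \<nu>\<^sub>k\<close>. So the \<open>M\<^sub>k\<close>-distances \<open>\<parallel>z\<^sup>k - s\<parallel>\<close> form a quasi-Fej\'er sequence and converge: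
  the iterates are bounded and the residuals \<open>z\<^sup>k - P\<^sub>k z\<^sup>k\<close> vanish. Cluster points are
  zeros of \<open>T\<close> because the graph of a maximal monotone operator is closed, and since the
  \<open>M\<^sub>k\<close>-distance to such a cluster point converges, its limit must be zero.\<close>

lemma sapd_linear: "self_adjoint_pd M \<Longrightarrow> linear M"
  by (simp add: self_adjoint_pd_def)

lemma sapd_sym: "self_adjoint_pd M \<Longrightarrow> M x \<bullet> y = x \<bullet> M y"
  by (simp add: self_adjoint_pd_def)

lemma sapd_pos: "self_adjoint_pd M \<Longrightarrow> x \<noteq> 0 \<Longrightarrow> 0 < x \<bullet> M x"
  by (simp add: self_adjoint_pd_def)

lemma sapd_nonneg: "self_adjoint_pd M \<Longrightarrow> 0 \<le> x \<bullet> M x"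
  using sapd_pos[of M x] by (cases "x = 0") (auto simp: linear_0 sapd_linear)

lemma sapd_continuous_on:
  fixes M :: "'a::euclidean_space \<Rightarrow> 'a"
  shows "self_adjoint_pd M \<Longrightarrow> continuous_on S M"
  by (intro linear_continuous_on linear_conv_bounded_linear[THEN iffD1] sapd_linear)

lemma quad_form_add:
  "self_adjoint_pd M \<Longrightarrow> (a + b) \<bullet> M (a + b) = a \<bullet> M a + 2 * (a \<bullet> M b) + b \<bullet> M b"
  using sapd_sym[of M b a]
  by (simp add: linear_add[OF sapd_linear] inner_add_left inner_add_right inner_commute)

lemma quad_form_scaleR: "self_adjoint_pd M \<Longrightarrow> (t *\<^sub>R a) \<bullet> M (t *\<^sub>R b) = t * t * (a \<bullet> M b)"
  by (simp add: linear_scale[OF sapd_linear])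

lemma quad_form_Cauchy_Schwarz:
  assumes sa: "self_adjoint_pd M"
  shows "(x \<bullet> M y)\<^sup>2 \<le> (x \<bullet> M x) * (y \<bullet> M y)"
proof (cases "y = 0")
  case True
  then show ?thesis by (simp add: linear_0[OF sapd_linear[OF sa]])
next
  case False
  define a where "a = y \<bullet> M y"
  have a: "0 < a" using sapd_pos[OF sa False] by (simp add: a_def)
  define t where "t = (x \<bullet> M y) / a"
  have "0 \<le> (x + (-t) *\<^sub>R y) \<bullet> M (x + (-t) *\<^sub>R y)" by (rule sapd_nonneg[OF sa])
  also have "\<dots> = x \<bullet> M x - 2 * t * (x \<bullet> M y) + t * t * a"
    using quad_form_add[OF sa, of x "(-t) *\<^sub>R y"] quad_form_scaleR[OF sa, of "-t" y y]
    by (simp add: linear_scale[OF sapd_linear[OF sa]] linear_neg[OF sapd_linear[OF sa]] a_def)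
  also have "\<dots> = x \<bullet> M x - (x \<bullet> M y)\<^sup>2 / a"
    using a by (simp add: t_def field_simps power2_eq_square)
  finally have "(x \<bullet> M y)\<^sup>2 / a \<le> x \<bullet> M x" by simp
  then show ?thesis using a by (simp add: a_def[symmetric] pos_divide_le_eq mult.commute)
qed

lemma quad_form_le_lambda_max:
  fixes M :: "'a::euclidean_space \<Rightarrow> 'a"
  assumes sa: "self_adjoint_pd M"
  shows "x \<bullet> M x \<le> lambda_max M * (x \<bullet> x)"
proof (cases "x = 0")
  case True
  then show ?thesis by (simp add: linear_0[OF sapd_linear[OF sa]])
next
  case False
  obtain K where K: "\<And>y. norm (M y) \<le> norm y * K"
    using sapd_linear[OF sa] linear_conv_bounded_linear bounded_linear.bounded by blast
  have bdd: "bdd_above {y \<bullet> M y | y. norm y = 1}"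
  proof (rule bdd_aboveI)
    fix r assume "r \<in> {y \<bullet> M y | y. norm y = 1}"
    then obtain y where y: "norm y = 1" "r = y \<bullet> M y" by auto
    have "r \<le> norm y * norm (M y)" using y norm_cauchy_schwarz by metis
    also have "\<dots> \<le> K" using K[of y] y by simp
    finally show "r \<le> K" .
  qed
  define y where "y = (1 / norm x) *\<^sub>R x"
  have "norm y = 1" using False by (simp add: y_def)
  then have "y \<bullet> M y \<le> lambda_max M" unfolding lambda_max_def
    by (intro cSup_upper bdd) auto
  moreover have "y \<bullet> M y = (x \<bullet> M x) / (x \<bullet> x)"
    unfolding y_def quad_form_scaleR[OF sa] using False
    by (simp add: power2_norm_eq_inner[symmetric] power2_eq_square)
  ultimately show ?thesis using False by (simp add: divide_le_eq)
qed

lemma Mnorm_nonneg: "self_adjoint_pd M \<Longrightarrow> 0 \<le> Mnorm M x"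
  by (simp add: Mnorm_def sapd_nonneg)

lemma Mnorm_power2: "self_adjoint_pd M \<Longrightarrow> (Mnorm M x)\<^sup>2 = x \<bullet> M x"
  by (simp add: Mnorm_def sapd_nonneg)

lemma Mnorm_triangle:
  assumes sa: "self_adjoint_pd M"
  shows "Mnorm M (a + b) \<le> Mnorm M a + Mnorm M b"
proof -
  have "(a \<bullet> M b)\<^sup>2 \<le> (Mnorm M a * Mnorm M b)\<^sup>2"
    using quad_form_Cauchy_Schwarz[OF sa, of a b] by (simp add: power_mult_distrib Mnorm_power2[OF sa])
  then have "a \<bullet> M b \<le> Mnorm M a * Mnorm M b"
    using abs_le_square_iff[THEN iffD2] Mnorm_nonneg[OF sa] by fastforce
  then have "(a + b) \<bullet> M (a + b) \<le> (Mnorm M a + Mnorm M b)\<^sup>2"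
    using quad_form_add[OF sa, of a b] unfolding power2_sum Mnorm_power2[OF sa] by linarith
  then show ?thesis unfolding Mnorm_def
    by (intro real_le_lsqrt) (simp_all add: sapd_nonneg[OF sa] add_nonneg_nonneg)
qed

lemma Mnorm_diff_triangle:
  "self_adjoint_pd M \<Longrightarrow> Mnorm M (a - c) \<le> Mnorm M (a - b) + Mnorm M (b - c)"
  using Mnorm_triangle[of M "a - b" "b - c"] by simp

lemma norm_le_Mnorm:
  assumes "loewner_ge M (\<lambda>x. l *\<^sub>R x)" and "0 < l"
  shows "sqrt l * norm x \<le> Mnorm M x"
proof -
  have "l * (x \<bullet> x) \<le> x \<bullet> M x" using assms(1) by (simp add: loewner_ge_def)
  then have "sqrt (l * (x \<bullet> x)) \<le> Mnorm M x" unfolding Mnorm_def by (rule real_sqrt_le_mono)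
  then show ?thesis by (simp add: real_sqrt_mult norm_eq_sqrt_inner)
qed

lemma Mnorm_le_lambda_max:
  fixes M :: "'a::euclidean_space \<Rightarrow> 'a"
  assumes "self_adjoint_pd M"
  shows "Mnorm M x \<le> sqrt (lambda_max M) * norm x"
proof -
  have "Mnorm M x \<le> sqrt (lambda_max M * (x \<bullet> x))"
    unfolding Mnorm_def by (intro real_sqrt_le_mono quad_form_le_lambda_max assms)
  then show ?thesis by (simp add: real_sqrt_mult norm_eq_sqrt_inner)
qed

lemma norm_apply_le_lambda_max:
  fixes M :: "'a::euclidean_space \<Rightarrow> 'a"
  assumes sa: "self_adjoint_pd M"
  shows "norm (M x) \<le> sqrt (lambda_max M) * Mnorm M x"
proof -
  have "M x \<bullet> M x \<le> lambda_max M * (x \<bullet> M x)"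
  proof (cases "M x = 0")
    case True
    then show ?thesis
      using quad_form_le_lambda_max[OF sa, of x] sapd_nonneg[OF sa, of x] by simp
  next
    case False
    have "(M x \<bullet> M x)\<^sup>2 \<le> (x \<bullet> M x) * (M x \<bullet> M (M x))"
      unfolding sapd_sym[OF sa, of x "M x"] by (rule quad_form_Cauchy_Schwarz[OF sa])
    also have "\<dots> \<le> (x \<bullet> M x) * (lambda_max M * (M x \<bullet> M x))"
      by (intro mult_left_mono quad_form_le_lambda_max[OF sa] sapd_nonneg[OF sa])
    finally have "(M x \<bullet> M x) * (M x \<bullet> M x) \<le> (lambda_max M * (x \<bullet> M x)) * (M x \<bullet> M x)"
      by (simp add: power2_eq_square algebra_simps)
    then show ?thesis using False by (simp add: mult_le_cancel_right)
  qed
  then have "sqrt (M x \<bullet> M x) \<le> sqrt (lambda_max M * (x \<bullet> M x))" by (rule real_sqrt_le_mono)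
  then show ?thesis by (simp add: real_sqrt_mult norm_eq_sqrt_inner Mnorm_def)
qed

lemma Mnorm_le_loewner:
  assumes "self_adjoint_pd M" and "0 \<le> \<nu>" and "loewner_ge (\<lambda>x. (1 + \<nu>) *\<^sub>R M x) M'"
  shows "Mnorm M' x \<le> (1 + \<nu>) * Mnorm M x"
proof -
  have "x \<bullet> M' x \<le> (1 + \<nu>) * (x \<bullet> M x)" using assms(3) by (simp add: loewner_ge_def)
  also have "\<dots> \<le> (1 + \<nu>)\<^sup>2 * (x \<bullet> M x)"
    using assms(2) sapd_nonneg[OF assms(1)] by (intro mult_right_mono) (auto simp: power2_eq_square)
  finally have "Mnorm M' x \<le> sqrt ((1 + \<nu>)\<^sup>2 * (x \<bullet> M x))"
    unfolding Mnorm_def by (rule real_sqrt_le_mono)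
  then show ?thesis using assms(2) by (simp add: real_sqrt_mult Mnorm_def)
qed

lemma Mdist_le_Mnorm:
  "self_adjoint_pd M \<Longrightarrow> s \<in> D \<Longrightarrow> Mdist M x D \<le> Mnorm M (x - s)"
  unfolding Mdist_def by (rule cInf_lower) (auto intro!: bdd_belowI[of _ 0] simp: Mnorm_nonneg)

lemma Mdist_le_affine:
  assumes "self_adjoint_pd M'" and "D \<noteq> {}" and "0 < a"
    and le: "\<And>s. s \<in> D \<Longrightarrow> Mnorm M' (x' - s) \<le> a * Mnorm M (x - s) + b"
  shows "Mdist M' x' D \<le> a * Mdist M x D + b"
proof -
  have "(Mdist M' x' D - b) / a \<le> Mdist M x D"
    unfolding Mdist_def[of M x]
  proof (rule cInf_greatest)
    fix y assume "y \<in> {Mnorm M (x - s) |s. s \<in> D}"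
    then obtain s where s: "s \<in> D" "y = Mnorm M (x - s)" by auto
    have "Mdist M' x' D \<le> a * y + b"
      unfolding s(2) using Mdist_le_Mnorm[OF assms(1) s(1), of x'] le[OF s(1)] by linarith
    then show "(Mdist M' x' D - b) / a \<le> y" using \<open>0 < a\<close> by (simp add: pos_divide_le_eq mult.commute)
  qed (use \<open>D \<noteq> {}\<close> in blast)
  then show ?thesis using \<open>0 < a\<close> by (simp add: pos_divide_le_eq mult.commute)
qed

subsection \<open>Maximal monotone operators and their resolvents\<close>

lemma monotone_barycentre_sum_nonneg:
  fixes F :: "('a::euclidean_space \<times> 'a) set"
  assumes "finite F"
    and mono: "\<And>p q. p \<in> F \<Longrightarrow> q \<in> F \<Longrightarrow> 0 \<le> (fst p - fst q) \<bullet> (snd p - snd q)"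
    and b_nonneg: "\<And>p. p \<in> F \<Longrightarrow> 0 \<le> b p" and b_sum: "(\<Sum>p\<in>F. b p) = 1"
    and x: "x = (\<Sum>q\<in>F. b q *\<^sub>R fst q)"
  shows "0 \<le> (\<Sum>p\<in>F. b p * ((fst p - x) \<bullet> (snd p - y)))"
proof -
  have "(\<Sum>p\<in>F. b p *\<^sub>R (fst p - x)) = x - (\<Sum>p\<in>F. b p) *\<^sub>R x"
    by (simp add: x scaleR_diff_right sum_subtractf scaleR_sum_left)
  then have "(\<Sum>p\<in>F. b p *\<^sub>R (fst p - x)) \<bullet> y = 0"
    using b_sum by simp
  then have "(\<Sum>p\<in>F. b p * ((fst p - x) \<bullet> y)) = 0"
    by (simp add: inner_sum_left)
  then have "(\<Sum>p\<in>F. b p * ((fst p - x) \<bullet> (snd p - y))) = (\<Sum>p\<in>F. b p * ((fst p - x) \<bullet> snd p))"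
    by (simp add: inner_diff_right sum_subtractf right_diff_distrib)
  also have "\<dots> = (\<Sum>p\<in>F. \<Sum>q\<in>F. b p * b q * ((fst p - fst q) \<bullet> snd p))" (is "_ = ?S")
  proof -
    have fx: "fst p - x = (\<Sum>q\<in>F. b q *\<^sub>R (fst p - fst q))" for p
      by (simp add: x scaleR_diff_right sum_subtractf flip: scaleR_sum_left, simp add: b_sum)
    show ?thesis unfolding fx by (simp add: inner_sum_left sum_distrib_left mult.assoc)
  qed
  finally have sum_eq: "(\<Sum>p\<in>F. b p * ((fst p - x) \<bullet> (snd p - y))) = ?S" .
  \<comment> \<open>Symmetrize the double sum by swapping the roles of \<open>p\<close> and \<open>q\<close>.\<close>
  have "?S = (\<Sum>p\<in>F. \<Sum>q\<in>F. b p * b q * ((fst q - fst p) \<bullet> snd q))"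
    by (subst sum.swap) (simp add: mult.commute)
  then have "2 * ?S = ?S + (\<Sum>p\<in>F. \<Sum>q\<in>F. b p * b q * ((fst q - fst p) \<bullet> snd q))"
    by simp
  also have "\<dots> = (\<Sum>p\<in>F. \<Sum>q\<in>F. b p * b q * ((fst p - fst q) \<bullet> (snd p - snd q)))"
    by (simp add: sum.distrib[symmetric] inner_diff_right inner_diff_left algebra_simps)
  also have "\<dots> \<ge> 0"
    by (intro sum_nonneg mult_nonneg_nonneg mono b_nonneg)
  finally show ?thesis using sum_eq by simp
qed

lemma barycentre_fixpoint:
  fixes pt :: "'i \<Rightarrow> 'a::euclidean_space"
  assumes F: "finite F"
    and g_cont: "\<And>p. p \<in> F \<Longrightarrow> continuous_on UNIV (g p)"
    and g_nonneg: "\<And>p x. p \<in> F \<Longrightarrow> 0 \<le> g p x"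
    and G_pos: "\<And>x. 0 < (\<Sum>p\<in>F. g p x)"
  shows "\<exists>x. x = (\<Sum>p\<in>F. (g p x / (\<Sum>q\<in>F. g q x)) *\<^sub>R pt p)"
proof -
  define G where "G x = (\<Sum>q\<in>F. g q x)" for x
  define f where "f x = (\<Sum>p\<in>F. (g p x / G x) *\<^sub>R pt p)" for x
  define C where "C = convex hull (pt ` F)"
  have "F \<noteq> {}" using G_pos[of 0] by auto
  then have "compact C" "convex C" "C \<noteq> {}"
    using F by (auto simp: C_def compact_convex_hull finite_imp_compact)
  moreover have "continuous_on C f"
    unfolding f_def G_def using G_pos
    by (intro continuous_intros continuous_on_subset[OF g_cont]) (auto simp: less_imp_neq[symmetric])
  moreover have "f \<in> C \<rightarrow> C"
  proof
    fix x
    have "(\<Sum>p\<in>F. g p x / G x) = 1"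
      using G_pos[of x] by (simp add: G_def flip: sum_divide_distrib)
    then show "f x \<in> C" unfolding f_def C_def
      using G_pos[of x] g_nonneg
      by (intro convex_sum[OF F convex_convex_hull]) (auto simp: G_def hull_inc)
  qed
  ultimately obtain x where "f x = x" using brouwer by metis
  then show ?thesis unfolding f_def G_def by metis
qed

lemma debrunner_flor:
  fixes F :: "('a::euclidean_space \<times> 'a) set" and \<phi> :: "'a \<Rightarrow> 'a"
  assumes F: "finite F" "F \<noteq> {}"
    and mono: "\<And>p q. p \<in> F \<Longrightarrow> q \<in> F \<Longrightarrow> 0 \<le> (fst p - fst q) \<bullet> (snd p - snd q)"
    and cont: "continuous_on UNIV \<phi>"
  shows "\<exists>x. \<forall>p\<in>F. 0 \<le> (fst p - x) \<bullet> (snd p - \<phi> x)"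
proof (rule ccontr)
  define h where "h p x = (fst p - x) \<bullet> (snd p - \<phi> x)" for p x
  define g where "g p x = max 0 (- h p x)" for p x
  assume "\<not> ?thesis"
  then have violated: "\<exists>p\<in>F. 0 < g p x" for x
    by (fastforce simp: g_def h_def not_le less_max_iff_disj)
  have g_nonneg: "0 \<le> g p x" for p x by (simp add: g_def)
  have G_pos: "0 < (\<Sum>p\<in>F. g p x)" for x
    using violated[of x] F(1) by (auto intro: sum_pos2 g_nonneg)
  have g_cont: "continuous_on UNIV (g p)" for p
    unfolding g_def h_def by (intro continuous_intros cont)
  obtain x where x: "x = (\<Sum>p\<in>F. (g p x / (\<Sum>q\<in>F. g q x)) *\<^sub>R fst p)"
    using barycentre_fixpoint[OF F(1) g_cont g_nonneg G_pos] by blast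
  have "0 \<le> (\<Sum>p\<in>F. (g p x / (\<Sum>q\<in>F. g q x)) * h p x)"
    unfolding h_def using G_pos[of x]
    by (intro monotone_barycentre_sum_nonneg[OF F(1) mono _ _ x])
       (auto simp: g_nonneg simp flip: sum_divide_distrib)
  moreover have "g p x * h p x = - (g p x)\<^sup>2" for p
    by (auto simp: g_def max_def power2_eq_square)
  then have "(\<Sum>p\<in>F. (g p x / (\<Sum>q\<in>F. g q x)) * h p x) = - (\<Sum>p\<in>F. (g p x)\<^sup>2) / (\<Sum>q\<in>F. g q x)"
    by (simp add: sum_divide_distrib sum_negf)
  moreover have "0 < (\<Sum>p\<in>F. (g p x)\<^sup>2)"
    using violated[of x] F(1) by (auto intro: sum_pos2)
  then have "0 < (\<Sum>p\<in>F. (g p x)\<^sup>2) / (\<Sum>q\<in>F. g q x)"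
    using G_pos[of x] by simp
  ultimately show False by simp
qed

lemma maximal_monotone_nonempty:
  assumes "maximal_monotone T"
  shows "\<exists>y v. v \<in> T y"
proof (rule ccontr)
  assume "\<not> ?thesis"
  then have "0 \<in> T 0" using assms unfolding maximal_monotone_def by blast
  with \<open>\<not> ?thesis\<close> show False by blast
qed

lemma maximal_monotone_graph_closed:
  assumes "maximal_monotone T" and graph: "\<And>j. v j \<in> T (w j)"
    and "w \<longlonglongrightarrow> x" and "v \<longlonglongrightarrow> u"
  shows "u \<in> T x"
proof -
  have "0 \<le> (x - y) \<bullet> (u - u')" if "u' \<in> T y" for y u'
  proof (rule LIMSEQ_le_const)
    show "(\<lambda>j. (w j - y) \<bullet> (v j - u')) \<longlonglongrightarrow> (x - y) \<bullet> (u - u')"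
      using assms(3,4) by (intro tendsto_intros)
    show "\<exists>N. \<forall>j\<ge>N. 0 \<le> (w j - y) \<bullet> (v j - u')"
      using assms(1) graph that unfolding maximal_monotone_def monotone_op_def by blast
  qed
  then show ?thesis using assms(1) unfolding maximal_monotone_def by blast
qed

lemma resolvent_test_set_bounded:
  fixes M :: "'a::real_inner \<Rightarrow> 'a"
  assumes lin: "linear M" and c: "0 < c"
    and coercive: "loewner_ge M (\<lambda>x. lam *\<^sub>R x)" and lam: "0 < lam"
  shows "bounded {w. 0 \<le> (y - w) \<bullet> (u - (1 / c) *\<^sub>R (b - M w))}"
proof -
  define R where "R = (c * norm u + norm (b - M y)) / lam"
  have "norm (w - y) \<le> R" if "0 \<le> (y - w) \<bullet> (u - (1 / c) *\<^sub>R (b - M w))" for w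
  proof -
    define d where "d = w - y"
    have "0 \<le> c * ((y - w) \<bullet> (u - (1 / c) *\<^sub>R (b - M w)))" using that c by simp
    also have "\<dots> = - c * (d \<bullet> u) + d \<bullet> (b - M y) - d \<bullet> M d"
      using c by (simp add: d_def linear_diff[OF lin] inner_diff_left inner_diff_right algebra_simps)
    moreover have "lam * (d \<bullet> d) \<le> d \<bullet> M d"
      using coercive by (simp add: loewner_ge_def)
    ultimately have "lam * (norm d)\<^sup>2 \<le> - c * (d \<bullet> u) + d \<bullet> (b - M y)"
      by (simp add: power2_norm_eq_inner)
    also have "\<dots> \<le> norm d * (c * norm u + norm (b - M y))"
    proof -
      have "- (d \<bullet> u) \<le> norm d * norm u"
        using Cauchy_Schwarz_ineq2[of d u] by (simp add: abs_le_iff)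
      then have "- c * (d \<bullet> u) \<le> c * (norm d * norm u)"
        using mult_left_mono[of _ _ c] c by fastforce
      moreover have "d \<bullet> (b - M y) \<le> norm d * norm (b - M y)"
        by (rule norm_cauchy_schwarz)
      ultimately show ?thesis by (simp add: algebra_simps)
    qed
    finally have "lam * norm d * norm d \<le> (c * norm u + norm (b - M y)) * norm d"
      by (simp add: power2_eq_square algebra_simps)
    then have "lam * norm d \<le> c * norm u + norm (b - M y)"
      using c lam by (cases "norm d = 0") (auto simp: mult_le_cancel_right)
    then show ?thesis using lam by (simp add: R_def d_def pos_le_divide_eq mult.commute)
  qed
  then have "{w. 0 \<le> (y - w) \<bullet> (u - (1 / c) *\<^sub>R (b - M w))} \<subseteq> cball y R"
    by (auto simp: dist_norm norm_minus_commute)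
  then show ?thesis using bounded_cball bounded_subset by blast
qed

lemma resolvent_exists:
  fixes T :: "'a::euclidean_space \<Rightarrow> 'a set"
  assumes mm: "maximal_monotone T" and sa: "self_adjoint_pd M" and c: "0 < c"
    and coercive: "loewner_ge M (\<lambda>x. lam *\<^sub>R x)" and lam: "0 < lam"
  shows "\<exists>w. \<exists>v\<in>T w. M z = M w + c *\<^sub>R v"
proof -
  define \<phi> where "\<phi> w = (1 / c) *\<^sub>R (M z - M w)" for w
  define S where "S p = {w. 0 \<le> (fst p - w) \<bullet> (snd p - \<phi> w)}" for p :: "'a \<times> 'a"
  define G where "G = {p. snd p \<in> T (fst p)}"
  have cont: "continuous_on UNIV \<phi>"
    unfolding \<phi>_def by (intro continuous_intros sapd_continuous_on[OF sa])
  have mono: "\<And>p q. p \<in> G \<Longrightarrow> q \<in> G \<Longrightarrow> 0 \<le> (fst p - fst q) \<bullet> (snd p - snd q)"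
    using mm unfolding maximal_monotone_def monotone_op_def G_def by blast
  obtain p0 where p0: "p0 \<in> G" using maximal_monotone_nonempty[OF mm] unfolding G_def by auto
  have "\<Inter>(S ` G) \<noteq> {}"
  proof (rule compact_fip_Heine_Borel)
    fix K assume "K \<in> S ` G"
    moreover have "closed (S p)" for p
      unfolding S_def by (intro closed_Collect_le continuous_intros continuous_on_subset[OF cont]) auto
    moreover have "bounded (S p)" for p
      unfolding S_def \<phi>_def
      by (rule resolvent_test_set_bounded[OF sapd_linear[OF sa] c coercive lam])
    ultimately show "compact K" by (auto simp: compact_eq_bounded_closed)
  next
    fix F' assume "finite F'" "F' \<subseteq> S ` G"
    then obtain G' where G': "G' \<subseteq> G" "finite G'" "F' = S ` G'"
      by (metis finite_subset_image)
    have "\<exists>x. \<forall>p\<in>insert p0 G'. 0 \<le> (fst p - x) \<bullet> (snd p - \<phi> x)"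
      using G' p0 by (intro debrunner_flor cont) (auto intro!: mono)
    then show "\<Inter>F' \<noteq> {}" using G' by (auto simp: S_def)
  qed
  then obtain w where w: "\<And>p. p \<in> G \<Longrightarrow> w \<in> S p" by blast
  have "0 \<le> (w - y) \<bullet> (\<phi> w - v)" if "v \<in> T y" for y v
    using w[of "(y, v)"] that
    by (simp add: G_def S_def) (metis inner_commute inner_minus_left inner_minus_right minus_diff_eq)
  then have "\<phi> w \<in> T w" using mm unfolding maximal_monotone_def by blast
  moreover have "M z = M w + c *\<^sub>R \<phi> w" using c by (simp add: \<phi>_def)
  ultimately show ?thesis by blast
qed

lemma resolvent_unique:
  fixes T :: "'a::real_inner \<Rightarrow> 'a set"
  assumes "monotone_op T" and sa: "self_adjoint_pd M" and c: "0 < c"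
    and "v\<^sub>1 \<in> T w\<^sub>1" "v\<^sub>2 \<in> T w\<^sub>2" and eq: "M w\<^sub>1 + c *\<^sub>R v\<^sub>1 = M w\<^sub>2 + c *\<^sub>R v\<^sub>2"
  shows "w\<^sub>1 = w\<^sub>2"
proof (rule ccontr)
  assume "w\<^sub>1 \<noteq> w\<^sub>2"
  then have "0 < (w\<^sub>1 - w\<^sub>2) \<bullet> M (w\<^sub>1 - w\<^sub>2)" using sapd_pos[OF sa] by simp
  also have "M (w\<^sub>1 - w\<^sub>2) = - c *\<^sub>R (v\<^sub>1 - v\<^sub>2)"
    using eq by (simp add: linear_diff[OF sapd_linear[OF sa]] scaleR_diff_right algebra_simps)
  finally have "(w\<^sub>1 - w\<^sub>2) \<bullet> (v\<^sub>1 - v\<^sub>2) < 0"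
    using c by (simp add: mult_less_0_iff)
  with assms(1,4,5) show False unfolding monotone_op_def by (meson not_le)
qed

lemma prox_op_resolvent:
  fixes T :: "'a::euclidean_space \<Rightarrow> 'a set"
  assumes mm: "maximal_monotone T" and sa: "self_adjoint_pd M" and c: "0 < c"
    and coercive: "loewner_ge M (\<lambda>x. lam *\<^sub>R x)" and lam: "0 < lam"
  shows "\<exists>v\<in>T (prox_op M c T z). M z = M (prox_op M c T z) + c *\<^sub>R v"
proof -
  have "\<exists>!w. \<exists>v\<in>T w. M z = M w + c *\<^sub>R v"
  proof (rule ex_ex1I)
    show "\<exists>w. \<exists>v\<in>T w. M z = M w + c *\<^sub>R v" by (rule resolvent_exists[OF assms])
  next
    fix w\<^sub>1 w\<^sub>2 assume "\<exists>v\<in>T w\<^sub>1. M z = M w\<^sub>1 + c *\<^sub>R v" "\<exists>v\<in>T w\<^sub>2. M z = M w\<^sub>2 + c *\<^sub>R v"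
    then show "w\<^sub>1 = w\<^sub>2"
      using resolvent_unique[OF _ sa c] mm unfolding maximal_monotone_def by metis
  qed
  then show ?thesis unfolding prox_op_def by (rule theI')
qed

lemma resolvent_firmly_nonexpansive:
  fixes T :: "'a::real_inner \<Rightarrow> 'a set"
  assumes "monotone_op T" and sa: "self_adjoint_pd M" and c: "0 < c"
    and v: "v \<in> T w" and eq: "M z = M w + c *\<^sub>R v" and s: "0 \<in> T s"
  shows "(Mnorm M (z - w))\<^sup>2 + (Mnorm M (w - s))\<^sup>2 \<le> (Mnorm M (z - s))\<^sup>2"
proof -
  have "0 \<le> (w - s) \<bullet> (v - 0)"
    using assms(1) v s unfolding monotone_op_def by blast
  then have "0 \<le> (w - s) \<bullet> (c *\<^sub>R v)" using c by simp
  also have "c *\<^sub>R v = M (z - w)" using eq by (simp add: linear_diff[OF sapd_linear[OF sa]])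
  finally have "0 \<le> (z - w) \<bullet> M (w - s)" by (metis sapd_sym[OF sa] inner_commute)
  moreover have "(z - w + (w - s)) \<bullet> M (z - w + (w - s))
      = (z - w) \<bullet> M (z - w) + 2 * ((z - w) \<bullet> M (w - s)) + (w - s) \<bullet> M (w - s)"
    by (rule quad_form_add[OF sa])
  ultimately show ?thesis by (simp add: Mnorm_power2[OF sa])
qed

subsection \<open>Quasi-Fej\'er sequences\<close>

lemma convergent_prod_one_plus:
  fixes \<nu> :: "nat \<Rightarrow> real"
  assumes \<nu>_nonneg: "\<And>k. 0 \<le> \<nu> k" and "summable \<nu>"
  shows "convergent (\<lambda>k. \<Prod>j<k. 1 + \<nu> j)"
proof (rule Bseq_monoseq_convergent)
  have "(\<Prod>j<k. 1 + \<nu> j) \<le> exp (suminf \<nu>)" for k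
  proof -
    have "(\<Prod>j<k. 1 + \<nu> j) \<le> (\<Prod>j<k. exp (\<nu> j))"
      by (intro prod_mono) (auto simp: \<nu>_nonneg add_nonneg_nonneg)
    also have "\<dots> = exp (\<Sum>j<k. \<nu> j)" by (simp add: exp_sum)
    also have "\<dots> \<le> exp (suminf \<nu>)"
      using sum_le_suminf[OF \<open>summable \<nu>\<close>, of "{..<k}"] \<nu>_nonneg by simp
    finally show ?thesis .
  qed
  moreover have "0 \<le> (\<Prod>j<k. 1 + \<nu> j)" for k
    by (intro prod_nonneg) (simp add: \<nu>_nonneg add_nonneg_nonneg)
  ultimately show "Bseq (\<lambda>k. \<Prod>j<k. 1 + \<nu> j)"
    by (intro BseqI'[of _ "exp (suminf \<nu>)"]) simp
  have "(\<Prod>j<k. 1 + \<nu> j) * 1 \<le> (\<Prod>j<k. 1 + \<nu> j) * (1 + \<nu> k)" for k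
    using \<open>\<And>k. 0 \<le> (\<Prod>j<k. 1 + \<nu> j)\<close> \<nu>_nonneg by (intro mult_left_mono) auto
  then show "monoseq (\<lambda>k. \<Prod>j<k. 1 + \<nu> j)"
    by (intro incseq_imp_monoseq incseq_SucI) simp
qed

text \<open>Dividing by the partial products \<open>\<Prod>j<k. 1 + \<nu> j\<close> reduces the recursion to
  \<open>a' (k + 1) \<le> a' k + b k\<close>, so \<open>a' k - (\<Sum>j<k. b j)\<close> is decreasing and bounded below.\<close>

lemma quasi_fejer_convergent:
  fixes a \<nu> b :: "nat \<Rightarrow> real"
  assumes a_nonneg: "\<And>k. 0 \<le> a k" and \<nu>_nonneg: "\<And>k. 0 \<le> \<nu> k" and "summable \<nu>"
    and b_nonneg: "\<And>k. 0 \<le> b k" and b_summable: "summable b"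
    and rec: "\<And>k. a (Suc k) \<le> (1 + \<nu> k) * a k + b k"
  shows "convergent a"
proof -
  define P where "P k = (\<Prod>j<k. 1 + \<nu> j)" for k
  have P_ge_1: "1 \<le> P k" for k
    unfolding P_def by (intro prod_ge_1) (simp add: \<nu>_nonneg)
  have P_Suc: "P (Suc k) = P k * (1 + \<nu> k)" for k by (simp add: P_def)
  define a' where "a' k = a k / P k" for k
  have a'_rec: "a' (Suc k) \<le> a' k + b k" for k
  proof -
    have "a' (Suc k) \<le> ((1 + \<nu> k) * a k + b k) / P (Suc k)"
      unfolding a'_def using rec[of k] P_ge_1[of "Suc k"] by (simp add: divide_right_mono)
    also have "\<dots> = a' k + b k / P (Suc k)"
      using \<nu>_nonneg[of k] P_ge_1[of k] by (simp add: P_Suc a'_def add_divide_distrib)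
    also have "b k / P (Suc k) \<le> b k"
      using P_ge_1[of "Suc k"] b_nonneg[of k] by (simp add: divide_le_eq mult_le_cancel_left1 mult.commute)
    finally show ?thesis by simp
  qed
  define u where "u k = a' k - (\<Sum>j<k. b j)" for k
  have "decseq u"
    by (rule decseq_SucI) (simp add: u_def a'_rec add.commute diff_le_eq)
  moreover have "- suminf b \<le> u k" for k
  proof -
    have "0 \<le> a' k" using a_nonneg[of k] P_ge_1[of k] by (simp add: a'_def)
    then show ?thesis using sum_le_suminf[OF b_summable, of "{..<k}"] b_nonneg by (simp add: u_def)
  qed
  ultimately have "convergent u" using decseq_convergent convergent_def by metis
  moreover have "convergent (\<lambda>k. \<Sum>j<k. b j)" using b_summable by (simp add: summable_iff_convergent)
  ultimately have "convergent a'" using convergent_add by (fastforce simp: u_def)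
  then have "convergent (\<lambda>k. a' k * P k)"
    using convergent_prod_one_plus[OF \<nu>_nonneg \<open>summable \<nu>\<close>] by (intro convergent_mult) (simp_all add: P_def)
  moreover have "(\<lambda>k. a' k * P k) = a"
    using P_ge_1 by (simp add: a'_def fun_eq_iff) (metis not_one_le_zero)
  ultimately show ?thesis by simp
qed

lemma summable_one_plus_mult:
  fixes \<nu> \<epsilon> :: "nat \<Rightarrow> real"
  assumes "\<And>k. 0 \<le> \<nu> k" "summable \<nu>" "\<And>k. 0 \<le> \<epsilon> k" "summable \<epsilon>"
  shows "summable (\<lambda>k. (1 + \<nu> k) * \<epsilon> k)"
proof (rule summable_comparison_test'[where N=0])
  show "summable (\<lambda>k. (1 + suminf \<nu>) * \<epsilon> k)" by (intro summable_mult assms(4))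
  fix k
  have "\<nu> k \<le> suminf \<nu>"
    using sum_le_suminf[OF assms(2), of "{k}"] assms(1) by simp
  then show "norm ((1 + \<nu> k) * \<epsilon> k) \<le> (1 + suminf \<nu>) * \<epsilon> k"
    using assms(1,3)[of k] by (simp add: mult_right_mono)
qed

subsection \<open>The inexact variable metric proximal point algorithm\<close>

locale inexact_vm_ppa =
  fixes T :: "'a::euclidean_space \<Rightarrow> 'a set"
    and c :: "nat \<Rightarrow> real" and M :: "nat \<Rightarrow> 'a \<Rightarrow> 'a"
    and \<nu> :: "nat \<Rightarrow> real" and lmin :: real
    and z :: "nat \<Rightarrow> 'a" and \<epsilon> :: "nat \<Rightarrow> real"
  assumes T_mm: "maximal_monotone T"
    and c_pos: "\<And>k. 0 < c k"
    and c_away: "\<exists>c\<^sub>m\<^sub>i\<^sub>n>0. \<forall>k. c\<^sub>m\<^sub>i\<^sub>n \<le> c k"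
    and M_sapd: "\<And>k. self_adjoint_pd (M k)"
    and M_var: "\<And>k. loewner_ge (\<lambda>x. (1 + \<nu> k) *\<^sub>R M k x) (M (Suc k))"
    and M_lb: "\<And>k. loewner_ge (M k) (\<lambda>x. lmin *\<^sub>R x)"
    and M_eventually_bounded: "\<exists>\<Lambda>. eventually (\<lambda>k. lambda_max (M k) \<le> \<Lambda>) sequentially"
    and \<nu>_nonneg: "\<And>k. 0 \<le> \<nu> k" and \<nu>_summable: "summable \<nu>"
    and lmin_pos: "0 < lmin"
    and zeros_nonempty: "{w. 0 \<in> T w} \<noteq> {}"
    and criterion_A: "\<And>k. Mnorm (M k) (z (Suc k) - prox_op (M k) (c k) T (z k)) \<le> \<epsilon> k"
    and \<epsilon>_nonneg: "\<And>k. 0 \<le> \<epsilon> k" and \<epsilon>_summable: "summable \<epsilon>"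
begin

abbreviation zeros :: "'a set" where "zeros \<equiv> {w. 0 \<in> T w}"

definition prox_point :: "nat \<Rightarrow> 'a" where
  "prox_point k = prox_op (M k) (c k) T (z k)"

definition prox_value :: "nat \<Rightarrow> 'a" where
  "prox_value k = (1 / c k) *\<^sub>R M k (z k - prox_point k)"

lemma prox_value_in_graph: "prox_value k \<in> T (prox_point k)"
  and prox_point_equation: "M k (z k) = M k (prox_point k) + c k *\<^sub>R prox_value k"
proof -
  obtain v where v: "v \<in> T (prox_point k)" "M k (z k) = M k (prox_point k) + c k *\<^sub>R v"
    using prox_op_resolvent[OF T_mm M_sapd c_pos M_lb lmin_pos] unfolding prox_point_def by blast
  then have "prox_value k = v"
    using c_pos[of k] by (simp add: prox_value_def linear_diff[OF sapd_linear[OF M_sapd]])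
  with v show "prox_value k \<in> T (prox_point k)" "M k (z k) = M k (prox_point k) + c k *\<^sub>R prox_value k"
    by simp_all
qed

lemma Mnorm_prox_point_step:
  "Mnorm (M (Suc k)) (z (Suc k) - s) \<le> (1 + \<nu> k) * (Mnorm (M k) (prox_point k - s) + \<epsilon> k)"
proof -
  have "Mnorm (M k) (z (Suc k) - s) \<le> Mnorm (M k) (z (Suc k) - prox_point k) + Mnorm (M k) (prox_point k - s)"
    by (rule Mnorm_diff_triangle[OF M_sapd])
  also have "\<dots> \<le> Mnorm (M k) (prox_point k - s) + \<epsilon> k"
    using criterion_A[of k] by (simp add: prox_point_def)
  finally have "(1 + \<nu> k) * Mnorm (M k) (z (Suc k) - s) \<le> (1 + \<nu> k) * (Mnorm (M k) (prox_point k - s) + \<epsilon> k)"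
    using \<nu>_nonneg[of k] by (intro mult_left_mono) auto
  with Mnorm_le_loewner[OF M_sapd \<nu>_nonneg M_var] show ?thesis by (rule order_trans)
qed

lemma prox_point_fejer:
  assumes "s \<in> zeros"
  shows "(Mnorm (M k) (z k - prox_point k))\<^sup>2 + (Mnorm (M k) (prox_point k - s))\<^sup>2
    \<le> (Mnorm (M k) (z k - s))\<^sup>2"
proof -
  have "monotone_op T" using T_mm by (simp add: maximal_monotone_def)
  from resolvent_firmly_nonexpansive[OF this M_sapd c_pos prox_value_in_graph prox_point_equation]
  show ?thesis using assms by simp
qed

lemma Mnorm_recursion:
  assumes "s \<in> zeros"
  shows "Mnorm (M (Suc k)) (z (Suc k) - s) \<le> (1 + \<nu> k) * Mnorm (M k) (z k - s) + (1 + \<nu> k) * \<epsilon> k"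
proof -
  have "(Mnorm (M k) (prox_point k - s))\<^sup>2 \<le> (Mnorm (M k) (z k - s))\<^sup>2"
    using prox_point_fejer[OF assms, of k] zero_le_power2[of "Mnorm (M k) (z k - prox_point k)"]
    by linarith
  then have "Mnorm (M k) (prox_point k - s) \<le> Mnorm (M k) (z k - s)"
    using Mnorm_nonneg[OF M_sapd] by (rule power2_le_imp_le)
  then have "(1 + \<nu> k) * (Mnorm (M k) (prox_point k - s) + \<epsilon> k) \<le> (1 + \<nu> k) * (Mnorm (M k) (z k - s) + \<epsilon> k)"
    using \<nu>_nonneg[of k] by (intro mult_left_mono) auto
  with Mnorm_prox_point_step[of k s] show ?thesis by (simp add: distrib_left)
qed

lemma Mdist_recursion:
  "Mdist (M (Suc k)) (z (Suc k)) zeros \<le> (1 + \<nu> k) * Mdist (M k) (z k) zeros + (1 + \<nu> k) * \<epsilon> k"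
  using \<nu>_nonneg[of k] by (intro Mdist_le_affine M_sapd zeros_nonempty Mnorm_recursion) auto

lemma Mnorm_convergent: "s \<in> zeros \<Longrightarrow> convergent (\<lambda>k. Mnorm (M k) (z k - s))"
  by (intro quasi_fejer_convergent[OF Mnorm_nonneg[OF M_sapd] \<nu>_nonneg \<nu>_summable _
        summable_one_plus_mult[OF \<nu>_nonneg \<nu>_summable \<epsilon>_nonneg \<epsilon>_summable] Mnorm_recursion])
     (simp_all add: \<epsilon>_nonneg \<nu>_nonneg add_nonneg_nonneg)

lemma norm_le_Mnorm_iterate: "norm x \<le> Mnorm (M k) x / sqrt lmin"
  using norm_le_Mnorm[OF M_lb lmin_pos, of x k] lmin_pos by (simp add: pos_le_divide_eq mult.commute)

lemma bounded_iterates: "bounded (range z)"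
proof -
  obtain s where s: "s \<in> zeros" using zeros_nonempty by blast
  obtain K where K: "\<And>k. norm (Mnorm (M k) (z k - s)) \<le> K"
    using convergent_imp_Bseq[OF Mnorm_convergent[OF s]] unfolding Bseq_def by blast
  have "norm (z k - s) \<le> K / sqrt lmin" for k
  proof -
    have "Mnorm (M k) (z k - s) / sqrt lmin \<le> K / sqrt lmin"
      using K[of k] lmin_pos by (intro divide_right_mono) auto
    then show ?thesis using norm_le_Mnorm_iterate[of "z k - s" k] by linarith
  qed
  then have "range z \<subseteq> cball s (K / sqrt lmin)"
    by (auto simp: dist_norm norm_minus_commute)
  then show ?thesis by (rule bounded_subset[OF bounded_cball])
qed

text \<open>With \<open>d\<^sub>k\<close> the \<open>M\<^sub>k\<close>-distance to a zero \<open>s\<close>, the Fej\'er inequality bounds the squared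
  residual by \<open>d\<^sub>k\<^sup>2 - r\<^sub>k\<^sup>2\<close>, where \<open>r\<^sub>k \<le> \<parallel>P\<^sub>k z\<^sup>k - s\<parallel>\<close> comes from the step estimate and tends to
  the same limit as \<open>d\<^sub>k\<close>.\<close>

lemma residual_tendsto_zero: "(\<lambda>k. Mnorm (M k) (z k - prox_point k)) \<longlonglongrightarrow> 0"
proof -
  obtain s where s: "s \<in> zeros" using zeros_nonempty by blast
  define d where "d k = Mnorm (M k) (z k - s)" for k
  have "convergent d" using Mnorm_convergent[OF s] by (simp add: d_def[abs_def])
  then obtain L where L: "d \<longlonglongrightarrow> L" by (auto simp: convergent_def)
  have "0 \<le> L" using L by (rule LIMSEQ_le_const) (auto simp: d_def Mnorm_nonneg[OF M_sapd])
  define r where "r k = max 0 (d (Suc k) / (1 + \<nu> k) - \<epsilon> k)" for k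
  have "r \<longlonglongrightarrow> max 0 (L / (1 + 0) - 0)"
    unfolding r_def using \<nu>_summable \<epsilon>_summable
    by (intro tendsto_intros LIMSEQ_Suc[OF L] summable_LIMSEQ_zero) simp_all
  then have r: "r \<longlonglongrightarrow> L" using \<open>0 \<le> L\<close> by simp
  have bound: "(Mnorm (M k) (z k - prox_point k))\<^sup>2 \<le> (d k)\<^sup>2 - (r k)\<^sup>2" for k
  proof -
    have "d (Suc k) / (1 + \<nu> k) \<le> Mnorm (M k) (prox_point k - s) + \<epsilon> k"
      using Mnorm_prox_point_step[of k s] \<nu>_nonneg[of k]
      by (simp add: d_def divide_le_eq mult.commute add_pos_nonneg)
    then have "r k \<le> Mnorm (M k) (prox_point k - s)"
      by (simp add: r_def Mnorm_nonneg[OF M_sapd])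
    then have "(r k)\<^sup>2 \<le> (Mnorm (M k) (prox_point k - s))\<^sup>2"
      by (intro power_mono) (simp_all add: r_def)
    then show ?thesis using prox_point_fejer[OF s, of k] by (simp add: d_def)
  qed
  have "(\<lambda>k. (d k)\<^sup>2 - (r k)\<^sup>2) \<longlonglongrightarrow> L\<^sup>2 - L\<^sup>2"
    by (intro tendsto_intros L r)
  then have lim: "(\<lambda>k. (d k)\<^sup>2 - (r k)\<^sup>2) \<longlonglongrightarrow> 0" by simp
  have "(\<lambda>k. (Mnorm (M k) (z k - prox_point k))\<^sup>2) \<longlonglongrightarrow> 0"
    by (rule tendsto_sandwich[OF _ _ tendsto_const lim]) (simp_all add: bound)
  then have "(\<lambda>k. sqrt ((Mnorm (M k) (z k - prox_point k))\<^sup>2)) \<longlonglongrightarrow> sqrt 0"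
    by (rule tendsto_real_sqrt)
  then show ?thesis by (simp add: Mnorm_nonneg[OF M_sapd])
qed

lemma iterate_minus_prox_point_tendsto_zero: "(\<lambda>k. z k - prox_point k) \<longlonglongrightarrow> 0"
proof -
  have lim: "(\<lambda>k. Mnorm (M k) (z k - prox_point k) / sqrt lmin) \<longlonglongrightarrow> 0"
    using residual_tendsto_zero by (rule tendsto_divide_zero)
  have "(\<lambda>k. norm (z k - prox_point k)) \<longlonglongrightarrow> 0"
    by (rule tendsto_sandwich[OF _ _ tendsto_const lim]) (simp_all add: norm_le_Mnorm_iterate)
  then show ?thesis by (simp add: tendsto_norm_zero_iff)
qed

lemma prox_value_tendsto_zero: "prox_value \<longlonglongrightarrow> 0"
proof -
  obtain c\<^sub>m\<^sub>i\<^sub>n where c\<^sub>m\<^sub>i\<^sub>n: "0 < c\<^sub>m\<^sub>i\<^sub>n" "\<And>k. c\<^sub>m\<^sub>i\<^sub>n \<le> c k" using c_away by blast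
  obtain \<Lambda>\<^sub>0 where "eventually (\<lambda>k. lambda_max (M k) \<le> \<Lambda>\<^sub>0) sequentially"
    using M_eventually_bounded by blast
  then have \<Lambda>: "eventually (\<lambda>k. lambda_max (M k) \<le> max \<Lambda>\<^sub>0 0) sequentially"
    by (rule eventually_mono) simp
  define \<Lambda> where "\<Lambda> = max \<Lambda>\<^sub>0 0"
  have "0 \<le> \<Lambda>" by (simp add: \<Lambda>_def)
  have upper: "eventually (\<lambda>k. norm (prox_value k) \<le> sqrt \<Lambda> * Mnorm (M k) (z k - prox_point k) / c\<^sub>m\<^sub>i\<^sub>n) sequentially"
    using \<Lambda> unfolding \<Lambda>_def[symmetric]
  proof eventually_elim
    case (elim k)
    have "norm (prox_value k) = norm (M k (z k - prox_point k)) / c k"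
      using c_pos[of k] by (simp add: prox_value_def)
    also have "\<dots> \<le> sqrt (lambda_max (M k)) * Mnorm (M k) (z k - prox_point k) / c k"
      using c_pos[of k] by (intro divide_right_mono norm_apply_le_lambda_max M_sapd) simp
    also have "\<dots> \<le> sqrt \<Lambda> * Mnorm (M k) (z k - prox_point k) / c k"
      using elim c_pos[of k] by (intro divide_right_mono mult_right_mono Mnorm_nonneg M_sapd) auto
    also have "\<dots> \<le> sqrt \<Lambda> * Mnorm (M k) (z k - prox_point k) / c\<^sub>m\<^sub>i\<^sub>n"
      using c\<^sub>m\<^sub>i\<^sub>n c_pos[of k] \<open>0 \<le> \<Lambda>\<close>
      by (intro divide_left_mono mult_nonneg_nonneg Mnorm_nonneg M_sapd) auto
    finally show ?case .
  qed
  have lim: "(\<lambda>k. sqrt \<Lambda> * Mnorm (M k) (z k - prox_point k) / c\<^sub>m\<^sub>i\<^sub>n) \<longlonglongrightarrow> 0"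
    using tendsto_mult_right_zero[OF residual_tendsto_zero, of "sqrt \<Lambda>"]
    by (rule tendsto_divide_zero)
  have "(\<lambda>k. norm (prox_value k)) \<longlonglongrightarrow> 0"
    by (rule tendsto_sandwich[OF _ upper tendsto_const lim]) simp
  then show ?thesis by (simp add: tendsto_norm_zero_iff)
qed

lemma cluster_point_zero:
  assumes "strict_mono r" and "(z \<circ> r) \<longlonglongrightarrow> l"
  shows "l \<in> zeros"
proof -
  have "(\<lambda>j. z (r j) - (z (r j) - prox_point (r j))) \<longlonglongrightarrow> l - 0"
    using assms LIMSEQ_subseq_LIMSEQ[OF iterate_minus_prox_point_tendsto_zero]
    by (intro tendsto_diff) (auto simp: o_def)
  moreover have "(\<lambda>j. prox_value (r j)) \<longlonglongrightarrow> 0"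
    using LIMSEQ_subseq_LIMSEQ[OF prox_value_tendsto_zero assms(1)] by (simp add: o_def)
  ultimately show ?thesis
    using maximal_monotone_graph_closed[OF T_mm prox_value_in_graph] by simp
qed

text \<open>The \<open>M\<^sub>k\<close>-distance to a cluster point \<open>l\<close> converges, and along the subsequence it is
  eventually at most \<open>\<surd>\<Lambda> \<parallel>z\<^sup>k - l\<parallel>\<close>, so its limit is zero.\<close>

lemma iterates_converge: "\<exists>l. z \<longlonglongrightarrow> l \<and> l \<in> zeros"
proof -
  obtain l r where r: "strict_mono r" and zr: "(z \<circ> r) \<longlonglongrightarrow> l"
    using bounded_imp_convergent_subsequence[OF bounded_iterates] by blast
  have l: "l \<in> zeros" by (rule cluster_point_zero[OF r zr])
  define d where "d k = Mnorm (M k) (z k - l)" for k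
  have "convergent d" using Mnorm_convergent[OF l] by (simp add: d_def[abs_def])
  then obtain L where L: "d \<longlonglongrightarrow> L" by (auto simp: convergent_def)
  obtain \<Lambda> where \<Lambda>: "eventually (\<lambda>k. lambda_max (M k) \<le> \<Lambda>) sequentially"
    using M_eventually_bounded by blast
  have "(d \<circ> r) \<longlonglongrightarrow> 0"
  proof (rule tendsto_sandwich[OF _ _ tendsto_const])
    show "eventually (\<lambda>j. 0 \<le> (d \<circ> r) j) sequentially"
      by (simp add: d_def Mnorm_nonneg[OF M_sapd])
    show "eventually (\<lambda>j. (d \<circ> r) j \<le> sqrt \<Lambda> * norm (z (r j) - l)) sequentially"
      using eventually_subseq[OF r \<Lambda>]
    proof eventually_elim
      case (elim j)
      have "sqrt (lambda_max (M (r j))) * norm (z (r j) - l) \<le> sqrt \<Lambda> * norm (z (r j) - l)"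
        using elim by (intro mult_right_mono) auto
      then show ?case
        using Mnorm_le_lambda_max[OF M_sapd, of "r j" "z (r j) - l"] by (simp add: d_def)
    qed
    have "(\<lambda>j. z (r j) - l) \<longlonglongrightarrow> 0"
      using zr by (simp add: o_def LIM_zero)
    then show "(\<lambda>j. sqrt \<Lambda> * norm (z (r j) - l)) \<longlonglongrightarrow> 0"
      using tendsto_mult_right_zero tendsto_norm_zero by blast
  qed
  then have "L = 0" using LIMSEQ_subseq_LIMSEQ[OF L r] LIMSEQ_unique by blast
  then have lim: "(\<lambda>k. d k / sqrt lmin) \<longlonglongrightarrow> 0"
    using L by (simp add: tendsto_divide_zero)
  have "(\<lambda>k. norm (z k - l)) \<longlonglongrightarrow> 0"
    by (rule tendsto_sandwich[OF _ _ tendsto_const lim]) (simp_all add: d_def norm_le_Mnorm_iterate)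
  then show ?thesis using l by (auto simp: tendsto_norm_zero_iff LIM_zero_iff)
qed

end

theorem mainTheorem3:
  fixes T :: "'a::euclidean_space \<Rightarrow> 'a set"
    and c :: "nat \<Rightarrow> real" and M :: "nat \<Rightarrow> 'a \<Rightarrow> 'a"
    and nu :: "nat \<Rightarrow> real" and lmin linf :: real
    and z :: "nat \<Rightarrow> 'a" and eps :: "nat \<Rightarrow> real"
  assumes T_mm: "maximal_monotone T"
    and c_pos: "\<And>k. 0 < c k"
    and c_away: "\<exists>cmin>0. \<forall>k. cmin \<le> c k"
    and M_sapd: "\<And>k. self_adjoint_pd (M k)"
    and M_var: "\<And>k. loewner_ge (\<lambda>x. (1 + nu k) *\<^sub>R M k x) (M (Suc k))"
    and M_lb: "\<And>k. loewner_ge (M k) (\<lambda>x. lmin *\<^sub>R x)"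
    and M_limsup: "limsup (\<lambda>k. ereal (lambda_max (M k))) = ereal linf"
    and nu_nonneg: "\<And>k. 0 \<le> nu k" and nu_summable: "summable nu"
    and lam: "lmin > 0" "linf \<ge> lmin"
    and Omega_ne: "{w. 0 \<in> T w} \<noteq> {}"
    and crit_A: "\<And>k. Mnorm (M k) (z (Suc k) - prox_op (M k) (c k) T (z k)) \<le> eps k"
    and eps_nonneg: "\<And>k. 0 \<le> eps k" and eps_summable: "summable eps"
  shows "bounded (range z) \<and>
         (\<forall>k. Mdist (M (Suc k)) (z (Suc k)) {w. 0 \<in> T w}
              \<le> (1 + nu k) * Mdist (M k) (z k) {w. 0 \<in> T w} + (1 + nu k) * eps k) \<and>
         (\<exists>zlim. z \<longlonglongrightarrow> zlim \<and> 0 \<in> T zlim)"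
proof -
  have "limsup (\<lambda>k. ereal (lambda_max (M k))) < ereal (linf + 1)"
    using M_limsup by simp
  from Limsup_lessD[OF this] have "eventually (\<lambda>k. lambda_max (M k) \<le> linf + 1) sequentially"
    by (simp add: eventually_mono)
  then interpret inexact_vm_ppa T c M nu lmin z eps
    using T_mm c_pos c_away M_sapd M_var M_lb nu_nonneg nu_summable lam(1) Omega_ne crit_A
      eps_nonneg eps_summable
    by unfold_locales blast+
  show ?thesis using bounded_iterates Mdist_recursion iterates_converge by blast
qed

end
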